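(* (Extended Lucas Theorem.) Let $n$ be a prime, let $m \geq n$ be an integer and let $k$ be an integer with $0 \leq k \leq m$. Write $m=\sum_{i=0}^r m_i n^i$ and $k=\sum_{i=0}^r k_i n^i$ in base $n$, where $r$ is a suitable nonnegative integer and $0 \leq m_i < n$, $0 \leq k_i < n$ are integers for each $i=0,1,\dots,r$. For each $i$ set $t_i=\min\{k_i,\, m_i-k_i\}$ and define \[ \binom{m_i}{t_i}_n := \begin{cases} (-1)^{t_i} \binom{n-1-m_i+t_i}{n-1-m_i} , & \text{if } m_i+t_i > n- 1,\\ (-1)^{t_i} \binom{n-1-m_i+t_i}{t_i}, & \text{if } m_i+t_i \leq n- 1 \text{ and } 2 m_i > n-1 +t_i,\\ \binom{m_i}{t_i}, & \text{otherwise}. \end{cases} \] Then \[ \binom{m}{k} \equiv \binom{m_r}{t_r}_n \binom{m-m_r n^r}{k-k_r n^r} \pmod{n}, \] and moreover \[ \binom{m}{k} \equiv \binom{m_r}{t_r}_n \binom{m_{r-1}}{t_{r-1}}_n \cdots \binom{m_1}{t_1}_n \binom{m_0}{t_0}_n \pmod{n}. \]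
   Context: Binomial coefficients $\binom{a}{b}$ with integer $a\ge 0$ follow the usual convention that $\binom{a}{b}=0$ if $b<0$ or $b>a$. *)

theory Defs
  imports Main "HOL-Number_Theory.Cong"
begin

definition binz :: "int \<Rightarrow> int \<Rightarrow> int" where
  "binz a b = (if b < 0 \<or> b > a then 0 else int (nat a choose nat b))"

text \<open>The modified coefficient (m_i choose t_i)_n of the paper; (-1)^t is rendered
  as (-1)^(nat |t|), which has the same value for every integer t.\<close>
definition gbin :: "nat \<Rightarrow> int \<Rightarrow> int \<Rightarrow> int" where
  "gbin n mi ti =
     (if mi + ti > int n - 1 then (-1) ^ nat \<bar>ti\<bar> * binz (int n - 1 - mi + ti) (int n - 1 - mi)
      else if 2 * mi > int n - 1 + ti then (-1) ^ nat \<bar>ti\<bar> * binz (int n - 1 - mi + ti) ti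
      else binz mi ti)"

end

theory Submission
  imports Defs "HOL-Computational_Algebra.Primes"
begin

(* Lucas's theorem, proved by induction on m with Pascal's rule, reduces m choose k modulo the
   prime n to the product of the digit binomials m_i choose k_i; splitting off the top digit gives
   the first congruence. By symmetry m_i choose k_i = m_i choose t_i, and both sign branches of
   the modified coefficient equal (-1)^t (q+t choose t) with q = n-1-m_i and t = t_i >= 0. Now
   (-1)^t (q+t choose t) = prod_{j<t} (-q-1-j)/(j+1), and -q-1-j = m_i-j-n is congruent to m_i-j,
   so modulo n it agrees with prod_{j<t} (m_i-j)/(j+1) = m_i choose t; the denominators j+1 <= m_i
   are units modulo n. *)

lemma lucas_cong_div_mod:
  fixes p m k :: nat
  assumes "prime p"
  shows "[m choose k = (m div p choose k div p) * (m mod p choose k mod p)] (mod p)"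
proof (induction m arbitrary: k)
  case 0
  have "0 choose k = (0 choose k div p) * (0 choose k mod p)"
  proof (cases "k = 0")
    case False
    then have "0 < k div p \<or> 0 < k mod p"
      using div_mult_mod_eq[of k p] by (metis add.right_neutral mult_zero_left neq0_conv)
    with False show ?thesis
      by (auto simp: binomial_eq_0)
  qed simp
  then show ?case
    by simp
next
  case (Suc m)
  show ?case
  proof (cases k)
    case 0
    then show ?thesis by simp
  next
    case (Suc j)
    define a b c d where "a = m div p" and "b = m mod p" and "c = j div p" and "d = j mod p"
    have "p > 1"
      using assms prime_gt_1_nat by blast
    then have "b < p" "d < p"
      by (simp_all add: b_def d_def)
    have m_step: "Suc m div p = (if Suc b = p then Suc a else a)"
                  "Suc m mod p = (if Suc b = p then 0 else Suc b)"
      by (simp_all add: a_def b_def div_Suc mod_Suc)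
    have j_step: "Suc j div p = (if Suc d = p then Suc c else c)"
                  "Suc j mod p = (if Suc d = p then 0 else Suc d)"
      by (simp_all add: c_def d_def div_Suc mod_Suc)
    have pascal: "[Suc m choose k = (a choose c) * (b choose d)
                    + (a choose Suc j div p) * (b choose Suc j mod p)] (mod p)"
      unfolding Suc binomial_Suc_Suc a_def b_def c_def d_def by (intro cong_add Suc.IH)
    show ?thesis
    proof (cases "Suc b = p \<and> Suc d < p")
      case True
      then have "p dvd (b choose d) + (b choose Suc d)"
        using dvd_choose_prime[OF _ _ _ assms, of "Suc d"] binomial_Suc_Suc[of b d] by simp
      moreover have "(a choose c) * (b choose d) + (a choose Suc j div p) * (b choose Suc j mod p)
                       = (a choose c) * ((b choose d) + (b choose Suc d))"
        using True by (simp add: j_step distrib_left)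
      ultimately have sum_zero:
        "[(a choose c) * (b choose d) + (a choose Suc j div p) * (b choose Suc j mod p) = 0] (mod p)"
        by (simp add: cong_0_iff)
      have target_zero: "(Suc m div p choose k div p) * (Suc m mod p choose k mod p) = 0"
        using True by (simp add: Suc m_step j_step)
      show ?thesis
        unfolding target_zero using cong_trans[OF pascal sum_zero] .
    next
      case False
      with \<open>b < p\<close> \<open>d < p\<close>
      have "(a choose c) * (b choose d) + (a choose Suc j div p) * (b choose Suc j mod p)
              = (Suc m div p choose k div p) * (Suc m mod p choose k mod p)"
        by (auto simp: Suc m_step j_step binomial_eq_0 distrib_left)
      with pascal show ?thesis by simp
    qed
  qed
qed

lemma lucas_cong_digits:
  fixes p r :: nat and md kd :: "nat \<Rightarrow> nat"
  assumes "prime p" and "\<And>i. i < r \<Longrightarrow> md i < p" and "\<And>i. i < r \<Longrightarrow> kd i < p"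
  shows "[(\<Sum>i<r. md i * p ^ i) choose (\<Sum>i<r. kd i * p ^ i)
           = (\<Prod>i<r. md i choose kd i)] (mod p)"
  using assms(2,3)
proof (induction r arbitrary: md kd)
  case 0
  then show ?case by simp
next
  case (Suc r)
  define M K where "M = (\<Sum>i<r. md (Suc i) * p ^ i)" and "K = (\<Sum>i<r. kd (Suc i) * p ^ i)"
  have "p > 0"
    using assms(1) prime_gt_0_nat by blast
  have split: "(\<Sum>i<Suc r. md i * p ^ i) = md 0 + p * M"
               "(\<Sum>i<Suc r. kd i * p ^ i) = kd 0 + p * K"
    unfolding sum.lessThan_Suc_shift M_def K_def by (simp_all add: sum_distrib_left ac_simps)
  have "md 0 < p" "kd 0 < p"
    using Suc.prems by auto
  with \<open>p > 0\<close>
  have "[md 0 + p * M choose kd 0 + p * K = (M choose K) * (md 0 choose kd 0)] (mod p)"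
    using lucas_cong_div_mod[OF assms(1), of "md 0 + p * M" "kd 0 + p * K"] by simp
  also have "[(M choose K) * (md 0 choose kd 0)
                = (\<Prod>i<r. md (Suc i) choose kd (Suc i)) * (md 0 choose kd 0)] (mod p)"
    unfolding M_def K_def by (intro cong_mult Suc.IH cong_refl) (use Suc.prems in auto)
  finally show ?case
    unfolding split prod.lessThan_Suc_shift by (simp add: mult.commute)
qed

lemma binz_of_nat [simp]: "binz (int a) (int b) = int (a choose b)"
  by (simp add: binz_def binomial_eq_0)

lemma binomial_negated_upper_cong:
  fixes p m q t :: nat
  assumes "prime p" and "m < p" and "t \<le> m" and "[q + m + 1 = 0] (mod p)"
  shows "[(-1) ^ t * int (q + t choose t) = int (m choose t)] (mod int p)"
  using assms(3)
proof (induction t)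
  case 0
  then show ?case by simp
next
  case (Suc t)
  have "int (Suc t) * ((-1) ^ Suc t * int (q + Suc t choose Suc t))
          = - int (q + Suc t) * ((-1) ^ t * int (q + t choose t))"
  proof -
    have "Suc t * (q + Suc t choose Suc t) = (q + Suc t) * (q + t choose t)"
      using Suc_times_binomial[of t "q + t"] by simp
    then have "int (Suc t) * int (q + Suc t choose Suc t) = int (q + Suc t) * int (q + t choose t)"
      by (metis of_nat_mult)
    then show ?thesis
      by (metis minus_mult_commute mult.left_commute mult_minus1 power_Suc)
  qed
  also have "[\<dots> = int (m - t) * int (m choose t)] (mod int p)"
  proof (rule cong_mult)
    show "[- int (q + Suc t) = int (m - t)] (mod int p)"
    proof -
      have "int p dvd int (m - t) - (- int (q + Suc t))"
        using assms(4) Suc.prems by (simp add: cong_0_iff ac_simps flip: int_dvd_int_iff)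
      then show ?thesis
        using cong_iff_dvd_diff cong_sym by blast
    qed
    show "[(-1) ^ t * int (q + t choose t) = int (m choose t)] (mod int p)"
      using Suc by simp
  qed
  also have "int (m - t) * int (m choose t) = int (Suc t) * int (m choose Suc t)"
    using binomial_absorb_comp[of m t] binomial_absorption[of t m] by (metis of_nat_mult)
  finally have "[int (Suc t) * ((-1) ^ Suc t * int (q + Suc t choose Suc t))
                  = int (Suc t) * int (m choose Suc t)] (mod int p)" .
  moreover have "coprime (int (Suc t)) (int p)"
  proof -
    have "\<not> p dvd Suc t"
      using assms(2) Suc.prems by (auto dest: dvd_imp_le)
    then show ?thesis
      using assms(1) prime_imp_coprime_nat coprime_commute coprime_int_iff by blast
  qed
  ultimately show ?case
    using cong_mult_lcancel by blast
qed

lemma gbin_cong_binomial: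
  fixes n mi ki :: nat and t :: int
  assumes "prime n" and "mi < n" and "t = min (int ki) (int mi - int ki)"
  shows "[gbin n (int mi) t = int (mi choose ki)] (mod int n)"
proof (cases "ki \<le> mi")
  case True
  define s q where "s = min ki (mi - ki)" and "q = n - 1 - mi"
  have t_s: "t = int s"
    using assms(3) True by (auto simp: s_def min_def)
  have "s \<le> mi" and choose_s: "mi choose s = mi choose ki"
    using True binomial_symmetric[of ki mi] by (auto simp: s_def min_def)
  have q_int: "int n - 1 - int mi = int q"
    using assms(2) by (simp add: q_def)
  have "gbin n (int mi) t = (-1) ^ s * int (q + s choose s) \<or>
        gbin n (int mi) t = int (mi choose s)"
    unfolding gbin_def q_int t_s using binomial_symmetric[of s "q + s"] by (simp flip: of_nat_add)
  moreover have "[(-1) ^ s * int (q + s choose s) = int (mi choose s)] (mod int n)"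
    using binomial_negated_upper_cong[OF assms(1,2) \<open>s \<le> mi\<close>, of q] assms(2)
    by (simp add: q_def cong_0_iff)
  ultimately show ?thesis
    using choose_s by auto
next
  case False
  then have "gbin n (int mi) t = 0"
    using assms(3) by (simp add: gbin_def binz_def)
  with False show ?thesis
    by (simp add: binomial_eq_0)
qed

lemma lucas_cong_top_digit:
  fixes p r :: nat and md kd :: "nat \<Rightarrow> nat"
  assumes "prime p" and "\<And>i. i \<le> r \<Longrightarrow> md i < p" and "\<And>i. i \<le> r \<Longrightarrow> kd i < p"
  shows "[(\<Sum>i\<le>r. md i * p ^ i) choose (\<Sum>i\<le>r. kd i * p ^ i)
           = (md r choose kd r) * ((\<Sum>i<r. md i * p ^ i) choose (\<Sum>i<r. kd i * p ^ i))] (mod p)"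
proof -
  have "[(\<Sum>i\<le>r. md i * p ^ i) choose (\<Sum>i\<le>r. kd i * p ^ i)
         = (\<Prod>i<Suc r. md i choose kd i)] (mod p)"
    unfolding lessThan_Suc_atMost[symmetric] using assms by (intro lucas_cong_digits) auto
  also have "(\<Prod>i<Suc r. md i choose kd i) = (md r choose kd r) * (\<Prod>i<r. md i choose kd i)"
    by simp
  also have "[\<dots> = (md r choose kd r)
                      * ((\<Sum>i<r. md i * p ^ i) choose (\<Sum>i<r. kd i * p ^ i))] (mod p)"
    using assms by (intro cong_mult cong_refl cong_sym[OF lucas_cong_digits]) auto
  finally show ?thesis .
qed

theorem theorem1p2:
  fixes n m k r :: nat and md kd :: "nat \<Rightarrow> nat" and t :: "nat \<Rightarrow> int"
  assumes "prime n"
    and "m \<ge> n"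
    and "k \<le> m"
    and "m = (\<Sum>i\<le>r. md i * n ^ i)"
    and "k = (\<Sum>i\<le>r. kd i * n ^ i)"
    and "\<And>i. i \<le> r \<Longrightarrow> md i < n"
    and "\<And>i. i \<le> r \<Longrightarrow> kd i < n"
    and "\<And>i. t i = min (int (kd i)) (int (md i) - int (kd i))"
  shows "[int (m choose k) = gbin n (int (md r)) (t r)
            * binz (int m - int (md r) * int n ^ r) (int k - int (kd r) * int n ^ r)] (mod int n) \<and>
         [int (m choose k) = (\<Prod>i\<le>r. gbin n (int (md i)) (t i))] (mod int n)"
proof
  have digit: "[int (md i choose kd i) = gbin n (int (md i)) (t i)] (mod int n)" if "i \<le> r" for i
    using gbin_cong_binomial[OF assms(1,6) assms(8)] that cong_sym by blast
  define m' k' where "m' = (\<Sum>i<r. md i * n ^ i)" and "k' = (\<Sum>i<r. kd i * n ^ i)"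
  have "int m - int (md r) * int n ^ r = int m'" "int k - int (kd r) * int n ^ r = int k'"
    unfolding assms(4,5) m'_def k'_def lessThan_Suc_atMost[symmetric] by simp_all
  moreover have "[int (m choose k) = int (md r choose kd r) * int (m' choose k')] (mod int n)"
    using lucas_cong_top_digit[OF assms(1,6,7)] unfolding assms(4,5) m'_def k'_def
    by (simp add: cong_int_iff flip: of_nat_mult)
  ultimately show "[int (m choose k) = gbin n (int (md r)) (t r)
            * binz (int m - int (md r) * int n ^ r) (int k - int (kd r) * int n ^ r)] (mod int n)"
    using digit[of r] by (simp add: cong_trans cong_mult)
  have "[int (m choose k) = (\<Prod>i\<le>r. int (md i choose kd i))] (mod int n)"
    using lucas_cong_digits[OF assms(1), of "Suc r" md kd] assms(6,7)
    unfolding assms(4,5) lessThan_Suc_atMost by (simp add: cong_int_iff flip: of_nat_prod)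
  also have "[(\<Prod>i\<le>r. int (md i choose kd i))
                = (\<Prod>i\<le>r. gbin n (int (md i)) (t i))] (mod int n)"
    using digit by (intro cong_prod) auto
  finally show "[int (m choose k) = (\<Prod>i\<le>r. gbin n (int (md i)) (t i))] (mod int n)" .
qed

end
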